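(* There is an absolute constant $c>0$ such that for every $n\ge2$, every $0<\rho\le1/3$ and every $0<\varepsilon\le\rho^{2n}$, the maximum over all $n$-agent symmetric averaging systems with parameter $\rho$ of the communication count $\mathcal{C}_\varepsilon$ is at least $$\Bigl(\frac{c}{\rho n}\log\frac1\varepsilon\Bigr)^{n-1}.$$
   Context: A (symmetric) averaging system with parameter $\rho\in(0,1/2]$ on $n$ agents consists of an infinite sequence of undirected graphs $(g_t)_{t\ge1}$ on $\{1,\dots,n\}$, each with a self-loop at every vertex, together with positions $x_i(t)\in[0,1]$ obeying: for each $t$ and vertex $i$, with $L_i(t)=\min\{x_j(t): \{i,j\}\in g_t\}$, $R_i(t)=\max\{x_j(t): \{i,j\}\in g_t\}$ and $\delta_i(t)=\rho(R_i(t)-L_i(t))$, the new position satisfies $L_i(t)+\delta_i(t)\le x_i(t+1)\le R_i(t)-\delta_i(t)$. The communication count $\mathcal{C}_\varepsilon$ of such a system is the number of time steps $t$ at which $g_t$ has an edge $\{i,j\}$ with $|x_i(t)-x_j(t)|\ge\varepsilon$. Logarithms are base 2. *)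

theory Defs
  imports Complex_Main "HOL-Library.Extended_Nat"
begin

text \<open>Agents are 0,...,n-1; time steps are t = 1,2,....
  g t i j : the undirected graph g_t has edge {i,j};  x t i : position of agent i at time t.\<close>

definition nbr_vals :: "nat \<Rightarrow> (nat \<Rightarrow> nat \<Rightarrow> nat \<Rightarrow> bool) \<Rightarrow> (nat \<Rightarrow> nat \<Rightarrow> real) \<Rightarrow> nat \<Rightarrow> nat \<Rightarrow> real set" where
  "nbr_vals n g x t i = {x t j | j. j < n \<and> g t i j}"

definition averaging_system :: "nat \<Rightarrow> real \<Rightarrow> (nat \<Rightarrow> nat \<Rightarrow> nat \<Rightarrow> bool) \<Rightarrow> (nat \<Rightarrow> nat \<Rightarrow> real) \<Rightarrow> bool" where
  "averaging_system n \<rho> g x \<longleftrightarrow>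
     (\<forall>t\<ge>1. \<forall>i<n. g t i i) \<and>
     (\<forall>t\<ge>1. \<forall>i<n. \<forall>j<n. g t i j \<longleftrightarrow> g t j i) \<and>
     (\<forall>t\<ge>1. \<forall>i<n. 0 \<le> x t i \<and> x t i \<le> 1) \<and>
     (\<forall>t\<ge>1. \<forall>i<n.
        let L = Min (nbr_vals n g x t i); R = Max (nbr_vals n g x t i); d = \<rho> * (R - L)
        in L + d \<le> x (Suc t) i \<and> x (Suc t) i \<le> R - d)"

definition comm_times :: "nat \<Rightarrow> real \<Rightarrow> (nat \<Rightarrow> nat \<Rightarrow> nat \<Rightarrow> bool) \<Rightarrow> (nat \<Rightarrow> nat \<Rightarrow> real) \<Rightarrow> nat set" where
  "comm_times n \<epsilon> g x = {t. t \<ge> 1 \<and> (\<exists>i<n. \<exists>j<n. g t i j \<and> \<bar>x t i - x t j\<bar> \<ge> \<epsilon>)}"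

definition comm_count :: "nat \<Rightarrow> real \<Rightarrow> (nat \<Rightarrow> nat \<Rightarrow> nat \<Rightarrow> bool) \<Rightarrow> (nat \<Rightarrow> nat \<Rightarrow> real) \<Rightarrow> enat" where
  "comm_count n \<epsilon> g x = (if finite (comm_times n \<epsilon> g x) then enat (card (comm_times n \<epsilon> g x)) else \<infinity>)"

end

theory Submission
  imports Defs
begin

text \<open>A spike of height \<open>s\<close> on \<open>m\<close> agents (the first \<open>m - 1\<close> at \<open>a\<close>, the last at \<open>a + s\<close>)
  is collapsed as follows. Averaging the two top agents to \<open>a + \<rho>s\<close> and \<open>a + s - \<rho>s\<close>
  leaves a spike of height \<open>\<rho>s\<close> on the first \<open>m - 1\<close> agents; collapsing it recursively
  produces a spike on \<open>m\<close> agents again, of height at least \<open>(1 - 2\<rho>)s\<close>. After \<open>M + 1\<close> such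
  rounds a single averaging step merges everything, so by induction the collapse costs at
  least \<open>(M + 1)^(m - 1)\<close> communication steps, provided every pair averaged at the bottom of the
  recursion is still \<open>\<epsilon>\<close> apart. For \<open>\<epsilon> \<le> \<rho>^(2n)\<close> this allows
  \<open>M \<approx> log (1/\<epsilon>) / (\<rho>n)\<close>. Any sequence of such block averaging steps is realized by an
  averaging system.\<close>

definition in_unit_interval :: "nat \<Rightarrow> (nat \<Rightarrow> real) \<Rightarrow> bool" where
  "in_unit_interval n p \<longleftrightarrow> (\<forall>i<n. 0 \<le> p i \<and> p i \<le> 1)"

text \<open>One time step in which the agents of \<open>S\<close> form a clique and all other agents are isolated.\<close>

definition block_step :: "nat \<Rightarrow> real \<Rightarrow> (nat \<Rightarrow> real) \<Rightarrow> nat set \<Rightarrow> (nat \<Rightarrow> real) \<Rightarrow> bool" where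
  "block_step n \<rho> p S q \<longleftrightarrow> S \<subseteq> {..<n} \<and> S \<noteq> {} \<and> (\<forall>i. i \<notin> S \<longrightarrow> q i = p i) \<and>
     (\<forall>i\<in>S. Min (p ` S) + \<rho> * (Max (p ` S) - Min (p ` S)) \<le> q i \<and>
             q i \<le> Max (p ` S) - \<rho> * (Max (p ` S) - Min (p ` S)))"

definition block_comm :: "real \<Rightarrow> (nat \<Rightarrow> real) \<Rightarrow> nat set \<Rightarrow> nat" where
  "block_comm \<epsilon> p S = (if \<exists>i\<in>S. \<exists>j\<in>S. \<epsilon> \<le> \<bar>p i - p j\<bar> then 1 else 0)"

inductive schedule :: "nat \<Rightarrow> real \<Rightarrow> real \<Rightarrow> (nat \<Rightarrow> real) \<Rightarrow> (nat \<Rightarrow> real) \<Rightarrow> nat \<Rightarrow> bool"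
  for n \<rho> \<epsilon> where
  refl: "schedule n \<rho> \<epsilon> p p 0"
| step: "block_step n \<rho> p S q \<Longrightarrow> schedule n \<rho> \<epsilon> q r k \<Longrightarrow>
    schedule n \<rho> \<epsilon> p r (block_comm \<epsilon> p S + k)"

lemma schedule_trans:
  assumes "schedule n \<rho> \<epsilon> p q k" "schedule n \<rho> \<epsilon> q r l"
  shows "schedule n \<rho> \<epsilon> p r (k + l)"
  using assms by (induction rule: schedule.induct) (simp_all add: add.assoc schedule.step)

lemma schedule_single:
  "block_step n \<rho> p S q \<Longrightarrow> schedule n \<rho> \<epsilon> p q (block_comm \<epsilon> p S)"
  using schedule.step[OF _ schedule.refl] by (metis add_0_right)

lemma block_step_in_unit_interval:
  assumes step: "block_step n \<rho> p S q" and p: "in_unit_interval n p" and "0 \<le> \<rho>"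
  shows "in_unit_interval n q"
proof -
  have S: "finite S" "S \<noteq> {}" "S \<subseteq> {..<n}"
    using step finite_subset unfolding block_step_def by auto
  have bounds: "0 \<le> Min (p ` S)" "Max (p ` S) \<le> 1" "Min (p ` S) \<le> Max (p ` S)"
    using S p unfolding in_unit_interval_def by (auto simp: Min_le_iff)
  have "0 \<le> q i \<and> q i \<le> 1" if "i < n" for i
  proof (cases "i \<in> S")
    case True
    have "0 \<le> \<rho> * (Max (p ` S) - Min (p ` S))" using \<open>0 \<le> \<rho>\<close> bounds(3) by simp
    moreover have "Min (p ` S) + \<rho> * (Max (p ` S) - Min (p ` S)) \<le> q i"
      and "q i \<le> Max (p ` S) - \<rho> * (Max (p ` S) - Min (p ` S))"
      using True step unfolding block_step_def by auto
    ultimately show ?thesis using bounds by linarith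
  next
    case False
    with step p that show ?thesis unfolding block_step_def in_unit_interval_def by auto
  qed
  then show ?thesis unfolding in_unit_interval_def by blast
qed

lemma block_step_midpoint:
  assumes "S \<subseteq> {..<n}" "S \<noteq> {}" "\<rho> \<le> 1/2"
  shows "block_step n \<rho> p S (\<lambda>i. if i \<in> S then (Min (p ` S) + Max (p ` S)) / 2 else p i)"
proof -
  define L R where "L = Min (p ` S)" and "R = Max (p ` S)"
  have "finite S" using assms(1) finite_subset by blast
  then have "L \<le> R" using assms(2) unfolding L_def R_def by (simp add: Min_le_iff)
  then have "\<rho> * (R - L) \<le> 1/2 * (R - L)"
    using assms(3) by (intro mult_right_mono) auto
  then have "L + \<rho> * (R - L) \<le> (L + R) / 2 \<and> (L + R) / 2 \<le> R - \<rho> * (R - L)" by (simp add: field_simps)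
  then show ?thesis using assms(1,2) unfolding block_step_def L_def R_def by simp
qed

definition prepend_graph :: "nat set \<Rightarrow> (nat \<Rightarrow> nat \<Rightarrow> nat \<Rightarrow> bool) \<Rightarrow> nat \<Rightarrow> nat \<Rightarrow> nat \<Rightarrow> bool" where
  "prepend_graph S g = (\<lambda>t i j. if t = 1 then i = j \<or> i \<in> S \<and> j \<in> S else g (t - 1) i j)"

definition prepend_positions :: "(nat \<Rightarrow> real) \<Rightarrow> (nat \<Rightarrow> nat \<Rightarrow> real) \<Rightarrow> nat \<Rightarrow> nat \<Rightarrow> real" where
  "prepend_positions p x = (\<lambda>t. if t \<le> 1 then p else x (t - 1))"

lemma averaging_system_static:
  assumes "in_unit_interval n p"
  shows "averaging_system n \<rho> (\<lambda>t i j. i = j) (\<lambda>t. p)"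
proof -
  have "nbr_vals n (\<lambda>t i j. i = j) (\<lambda>t. p) t i = {p i}" if "i < n" for t i
    using that unfolding nbr_vals_def by auto
  then show ?thesis
    using assms unfolding averaging_system_def in_unit_interval_def by (auto simp: Let_def)
qed

lemma comm_count_static:
  assumes "0 < \<epsilon>"
  shows "comm_count n \<epsilon> (\<lambda>t i j. i = j) (\<lambda>t. p) = 0"
proof -
  have "comm_times n \<epsilon> (\<lambda>t i j. i = j) (\<lambda>t. p) = {}"
    using assms unfolding comm_times_def by auto
  then show ?thesis unfolding comm_count_def by (simp add: zero_enat_def)
qed

lemma averaging_system_prepend:
  assumes sys: "averaging_system n \<rho> g x" and "x 1 = q"
    and step: "block_step n \<rho> p S q" and "in_unit_interval n p"
  shows "averaging_system n \<rho> (prepend_graph S g) (prepend_positions p x)"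
proof -
  let ?g = "prepend_graph S g" and ?x = "prepend_positions p x"
  have S: "S \<subseteq> {..<n}" using step unfolding block_step_def by blast
  have nbr_first: "nbr_vals n ?g ?x 1 i = (if i \<in> S then p ` S else {p i})" if "i < n" for i
    using that S unfolding nbr_vals_def prepend_graph_def prepend_positions_def by auto
  have nbr_later: "nbr_vals n ?g ?x t i = nbr_vals n g x (t - 1) i" if "t \<ge> 2" for t i
    using that unfolding nbr_vals_def prepend_graph_def prepend_positions_def by auto
  have update: "let L = Min (nbr_vals n ?g ?x t i); R = Max (nbr_vals n ?g ?x t i); d = \<rho> * (R - L)
      in L + d \<le> ?x (Suc t) i \<and> ?x (Suc t) i \<le> R - d" if "1 \<le> t" "i < n" for t i
  proof (cases "t = 1")
    case True
    then show ?thesis using step \<open>x 1 = q\<close> nbr_first[OF \<open>i < n\<close>]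
      unfolding block_step_def prepend_positions_def by (cases "i \<in> S") (simp_all add: Let_def)
  next
    case False
    then have "t - 1 \<ge> 1" "Suc t = Suc (Suc (t - 1))" using that by auto
    with sys nbr_later[of t] \<open>i < n\<close> show ?thesis
      unfolding averaging_system_def prepend_positions_def by auto
  qed
  show ?thesis
    using sys \<open>in_unit_interval n p\<close> update
    unfolding averaging_system_def in_unit_interval_def prepend_graph_def prepend_positions_def
    by auto
qed

lemma comm_times_prepend:
  assumes "S \<subseteq> {..<n}" "0 < \<epsilon>"
  shows "comm_times n \<epsilon> (prepend_graph S g) (prepend_positions p x) =
    (if block_comm \<epsilon> p S = 1 then {1} else {}) \<union> Suc ` comm_times n \<epsilon> g x"
proof -
  have first: "1 \<in> comm_times n \<epsilon> (prepend_graph S g) (prepend_positions p x) \<longleftrightarrow> block_comm \<epsilon> p S = 1"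
    using assms unfolding comm_times_def prepend_graph_def prepend_positions_def block_comm_def by auto
  have later: "Suc t \<in> comm_times n \<epsilon> (prepend_graph S g) (prepend_positions p x) \<longleftrightarrow>
      t \<in> comm_times n \<epsilon> g x" if "t \<ge> 1" for t
    using that unfolding comm_times_def prepend_graph_def prepend_positions_def by auto
  show ?thesis
  proof (intro set_eqI iffI)
    fix t assume t: "t \<in> comm_times n \<epsilon> (prepend_graph S g) (prepend_positions p x)"
    show "t \<in> (if block_comm \<epsilon> p S = 1 then {1} else {}) \<union> Suc ` comm_times n \<epsilon> g x"
    proof (cases "t = 1")
      case True
      with t first show ?thesis by simp
    next
      case False
      with t have "t = Suc (t - 1)" "t - 1 \<ge> 1" unfolding comm_times_def by auto
      with t later[of "t - 1"] show ?thesis by (metis UnI2 image_eqI)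
    qed
  next
    fix t assume "t \<in> (if block_comm \<epsilon> p S = 1 then {1} else {}) \<union> Suc ` comm_times n \<epsilon> g x"
    then consider "t = 1" "block_comm \<epsilon> p S = 1" | t' where "t = Suc t'" "t' \<in> comm_times n \<epsilon> g x"
      by (auto split: if_splits)
    then show "t \<in> comm_times n \<epsilon> (prepend_graph S g) (prepend_positions p x)"
    proof cases
      case 1
      with first show ?thesis by simp
    next
      case 2
      then have "t' \<ge> 1" unfolding comm_times_def by simp
      with 2 later show ?thesis by simp
    qed
  qed
qed

lemma comm_count_prepend:
  assumes "S \<subseteq> {..<n}" "0 < \<epsilon>" "comm_count n \<epsilon> g x = enat k"
  shows "comm_count n \<epsilon> (prepend_graph S g) (prepend_positions p x) = enat (block_comm \<epsilon> p S + k)"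
proof -
  have "finite (comm_times n \<epsilon> g x)" "card (comm_times n \<epsilon> g x) = k"
    using assms(3) unfolding comm_count_def by (auto split: if_splits)
  moreover have "card (if block_comm \<epsilon> p S = 1 then {1} else {}) = block_comm \<epsilon> p S"
    unfolding block_comm_def by simp
  moreover have "(if block_comm \<epsilon> p S = 1 then {1} else {}) \<inter> Suc ` comm_times n \<epsilon> g x = {}"
    unfolding comm_times_def by auto
  ultimately show ?thesis
    unfolding comm_count_def comm_times_prepend[OF assms(1,2)]
    by (simp add: card_Un_disjoint card_image block_comm_def)
qed

lemma schedule_realizable:
  assumes "schedule n \<rho> \<epsilon> p r k" "in_unit_interval n p" "0 \<le> \<rho>" "0 < \<epsilon>"
  shows "\<exists>g x. averaging_system n \<rho> g x \<and> x 1 = p \<and> comm_count n \<epsilon> g x = enat k"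
  using assms
proof (induction rule: schedule.induct)
  case (refl p)
  then have "averaging_system n \<rho> (\<lambda>t i j. i = j) (\<lambda>t. p)"
    and "comm_count n \<epsilon> (\<lambda>t i j. i = j) (\<lambda>t. p) = enat 0"
    using averaging_system_static comm_count_static by (auto simp: zero_enat_def)
  then show ?case by blast
next
  case (step p S q r k)
  then have "in_unit_interval n q" using block_step_in_unit_interval by blast
  with step.IH step.prems obtain g x
    where "averaging_system n \<rho> g x" "x 1 = q" "comm_count n \<epsilon> g x = enat k" by blast
  moreover have "S \<subseteq> {..<n}" using step.hyps(1) unfolding block_step_def by blast
  ultimately have "averaging_system n \<rho> (prepend_graph S g) (prepend_positions p x)"
    and "comm_count n \<epsilon> (prepend_graph S g) (prepend_positions p x) = enat (block_comm \<epsilon> p S + k)"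
    using averaging_system_prepend[OF _ _ step.hyps(1) step.prems(1)] comm_count_prepend[OF _ step.prems(3)]
    by blast+
  moreover have "prepend_positions p x 1 = p" unfolding prepend_positions_def by simp
  ultimately show ?case by blast
qed

definition spike :: "nat \<Rightarrow> real \<Rightarrow> real \<Rightarrow> (nat \<Rightarrow> real) \<Rightarrow> bool" where
  "spike m a s p \<longleftrightarrow> (\<forall>i<m - 1. p i = a) \<and> p (m - 1) = a + s"

lemma block_step_spike_pair:
  assumes "2 \<le> m" "m \<le> n" "0 \<le> s" "\<rho> \<le> 1/2" "spike m a s p"
  shows "block_step n \<rho> p {m - 2, m - 1} (p(m - 2 := a + \<rho> * s, m - 1 := a + s - \<rho> * s))"
proof -
  have "p ` {m - 2, m - 1} = {a, a + s}" using assms(1,5) unfolding spike_def by auto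
  then have "Min (p ` {m - 2, m - 1}) = a" "Max (p ` {m - 2, m - 1}) = a + s" using assms(3) by auto
  moreover have "\<rho> * s \<le> 1/2 * s" using assms(3,4) by (intro mult_right_mono)
  moreover have "{m - 2, m - 1} \<subseteq> {..<n}" "m - 2 \<noteq> m - 1" using assms(1,2) by auto
  ultimately show ?thesis using assms(3) unfolding block_step_def by auto
qed

lemma block_comm_spike_pair:
  assumes "2 \<le> m" "\<epsilon> \<le> s" "spike m a s p"
  shows "block_comm \<epsilon> p {m - 2, m - 1} = 1"
proof -
  have "\<epsilon> \<le> \<bar>p (m - 1) - p (m - 2)\<bar>" using assms unfolding spike_def by auto
  then show ?thesis unfolding block_comm_def by force
qed

lemma block_step_spike_merge:
  assumes "2 \<le> m" "m \<le> n" "0 \<le> s" "\<rho> \<le> 1/2" "spike m c s p"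
  shows "block_step n \<rho> p {..<m} (\<lambda>i. if i < m then c + s / 2 else p i)"
proof -
  have "p ` {..<m} = {c, c + s}"
  proof
    show "p ` {..<m} \<subseteq> {c, c + s}"
    proof
      fix v assume "v \<in> p ` {..<m}"
      then obtain i where "i < m" "v = p i" by blast
      then have "i < m - 1 \<or> i = m - 1" by linarith
      then show "v \<in> {c, c + s}" using assms(5) \<open>v = p i\<close> unfolding spike_def by auto
    qed
  next
    have "p 0 = c" "p (m - 1) = c + s" using assms(1,5) unfolding spike_def by auto
    moreover have "0 < m" "m - 1 < m" using assms(1) by auto
    ultimately show "{c, c + s} \<subseteq> p ` {..<m}" by (metis empty_subsetI image_eqI insert_subset lessThan_iff)
  qed
  then have bounds: "Min (p ` {..<m}) = c" "Max (p ` {..<m}) = c + s" using assms(3) by auto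
  have "{..<m} \<subseteq> {..<n}" "{..<m} \<noteq> {}" using assms(1,2) by (auto simp: lessThan_empty_iff)
  then have "block_step n \<rho> p {..<m}
      (\<lambda>i. if i \<in> {..<m} then (Min (p ` {..<m}) + Max (p ` {..<m})) / 2 else p i)"
    using assms(4) by (rule block_step_midpoint)
  also have "(\<lambda>i. if i \<in> {..<m} then (Min (p ` {..<m}) + Max (p ` {..<m})) / 2 else p i) =
      (\<lambda>i. if i < m then c + s / 2 else p i)"
    unfolding bounds by auto
  finally show ?thesis .
qed

text \<open>Each level of the recursion shrinks the admissible spike height by the factor \<open>\<rho>\<close> of the
  pair step and by \<open>1 - 2\<rho>\<close> per round; the bounds on \<open>\<epsilon>\<close> ensure that the pair averaged at
  the bottom level (\<open>m = 2\<close>) is still \<open>\<epsilon>\<close> apart.\<close>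

definition collapsible :: "nat \<Rightarrow> real \<Rightarrow> real \<Rightarrow> nat \<Rightarrow> nat \<Rightarrow> bool" where
  "collapsible n \<rho> \<epsilon> M m \<longleftrightarrow> (\<forall>a s p. 0 \<le> s \<longrightarrow>
     \<epsilon> \<le> s * (1 - 2*\<rho>)^M * (\<rho> * (1 - 2*\<rho>)^M)^(m - 2) \<longrightarrow> spike m a s p \<longrightarrow>
     (\<exists>q k c. schedule n \<rho> \<epsilon> p q k \<and> (M + 1)^(m - 1) \<le> k \<and> a \<le> c \<and> c \<le> a + s \<and>
        (\<forall>i<m. q i = c) \<and> (\<forall>i\<ge>m. q i = p i)))"

definition shrinkable :: "nat \<Rightarrow> real \<Rightarrow> real \<Rightarrow> nat \<Rightarrow> nat \<Rightarrow> bool" where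
  "shrinkable n \<rho> \<epsilon> M m \<longleftrightarrow> (\<forall>a s p. 0 \<le> s \<longrightarrow>
     \<epsilon> \<le> s * (\<rho> * (1 - 2*\<rho>)^M)^(m - 2) \<longrightarrow> spike m a s p \<longrightarrow>
     (\<exists>q k c s'. schedule n \<rho> \<epsilon> p q k \<and> (M + 1)^(m - 2) \<le> k \<and> a \<le> c \<and> c + s' \<le> a + s \<and>
        (1 - 2*\<rho>) * s \<le> s' \<and> spike m c s' q \<and> (\<forall>i\<ge>m. q i = p i)))"

lemma collapsibleD:
  assumes "collapsible n \<rho> \<epsilon> M m" "0 \<le> s"
    "\<epsilon> \<le> s * (1 - 2*\<rho>)^M * (\<rho> * (1 - 2*\<rho>)^M)^(m - 2)" "spike m a s p"
  obtains q k c where "schedule n \<rho> \<epsilon> p q k" "(M + 1)^(m - 1) \<le> k" "a \<le> c" "c \<le> a + s"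
    "\<forall>i<m. q i = c" "\<forall>i\<ge>m. q i = p i"
  using assms unfolding collapsible_def by blast

lemma shrinkableD:
  assumes "shrinkable n \<rho> \<epsilon> M m" "0 \<le> s" "\<epsilon> \<le> s * (\<rho> * (1 - 2*\<rho>)^M)^(m - 2)" "spike m a s p"
  obtains q k c s' where "schedule n \<rho> \<epsilon> p q k" "(M + 1)^(m - 2) \<le> k" "a \<le> c" "c + s' \<le> a + s"
    "(1 - 2*\<rho>) * s \<le> s'" "spike m c s' q" "\<forall>i\<ge>m. q i = p i"
  using assms unfolding shrinkable_def by blast

lemma shrinkable_two:
  assumes "2 \<le> n" "0 \<le> \<rho>" "\<rho> \<le> 1/2"
  shows "shrinkable n \<rho> \<epsilon> M 2"
  unfolding shrinkable_def
proof (intro allI impI)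
  fix a s p
  assume "0 \<le> s" "\<epsilon> \<le> s * (\<rho> * (1 - 2*\<rho>)^M)^(2 - 2)" "spike 2 a s p"
  define q where "q = p(0 := a + \<rho> * s, 1 := a + s - \<rho> * s)"
  have "block_step n \<rho> p {0, 1} q"
    using block_step_spike_pair[of 2 n s \<rho> a p] assms(1,3) \<open>0 \<le> s\<close> \<open>spike 2 a s p\<close>
    unfolding q_def by simp
  moreover have "block_comm \<epsilon> p {0, 1} = 1"
    using block_comm_spike_pair[of 2 \<epsilon> s a p] \<open>spike 2 a s p\<close> \<open>\<epsilon> \<le> _\<close> by simp
  ultimately have "schedule n \<rho> \<epsilon> p q 1" using schedule_single by metis
  moreover have "0 \<le> \<rho> * s" using assms(2) \<open>0 \<le> s\<close> by simp
  ultimately show "\<exists>q k c s'. schedule n \<rho> \<epsilon> p q k \<and> (M + 1)^(2 - 2) \<le> k \<and> a \<le> c \<and>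
      c + s' \<le> a + s \<and> (1 - 2*\<rho>) * s \<le> s' \<and> spike 2 c s' q \<and> (\<forall>i\<ge>2. q i = p i)"
    by (intro exI[of _ q] exI[of _ 1] exI[of _ "a + \<rho> * s"] exI[of _ "s - 2 * \<rho> * s"])
      (auto simp: q_def spike_def algebra_simps)
qed

lemma shrinkable_Suc:
  assumes "collapsible n \<rho> \<epsilon> M m" "2 \<le> m" "m < n" "0 \<le> \<rho>" "\<rho> \<le> 1/2"
  shows "shrinkable n \<rho> \<epsilon> M (Suc m)"
  unfolding shrinkable_def
proof (intro allI impI)
  fix a s p
  assume s: "0 \<le> s" and \<epsilon>: "\<epsilon> \<le> s * (\<rho> * (1 - 2*\<rho>)^M)^(Suc m - 2)" and p: "spike (Suc m) a s p"
  define p1 where "p1 = p(m - 1 := a + \<rho> * s, m := a + s - \<rho> * s)"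
  have step: "block_step n \<rho> p {m - 1, m} p1"
    using block_step_spike_pair[of "Suc m" n s \<rho> a p] assms(2,3,5) s p unfolding p1_def by simp
  have p1: "spike m a (\<rho> * s) p1" using p assms(2) unfolding p1_def spike_def by auto
  have \<epsilon>1: "\<epsilon> \<le> (\<rho> * s) * (1 - 2*\<rho>)^M * (\<rho> * (1 - 2*\<rho>)^M)^(m - 2)"
  proof -
    have "Suc m - 2 = Suc (m - 2)" using assms(2) by simp
    with \<epsilon> show ?thesis by (simp add: mult_ac)
  qed
  have "0 \<le> \<rho> * s" using assms(4) s by simp
  obtain q k c where q: "schedule n \<rho> \<epsilon> p1 q k" "(M + 1)^(m - 1) \<le> k"
    "a \<le> c" "c \<le> a + \<rho> * s" "\<forall>i<m. q i = c" "\<forall>i\<ge>m. q i = p1 i"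
    using collapsibleD[OF assms(1) \<open>0 \<le> \<rho> * s\<close> \<epsilon>1 p1] by blast
  have "schedule n \<rho> \<epsilon> p q (block_comm \<epsilon> p {m - 1, m} + k)"
    using schedule.step[OF step q(1)] .
  moreover have "(M + 1)^(Suc m - 2) \<le> block_comm \<epsilon> p {m - 1, m} + k"
    using q(2) assms(2) by (simp add: Suc_diff_le)
  moreover have "spike (Suc m) c (a + s - \<rho> * s - c) q" "\<forall>i\<ge>Suc m. q i = p i"
    using q(5,6) unfolding spike_def p1_def by auto
  moreover have "c + (a + s - \<rho> * s - c) \<le> a + s" "(1 - 2*\<rho>) * s \<le> a + s - \<rho> * s - c"
    using q(3,4) \<open>0 \<le> \<rho> * s\<close> by (simp_all add: algebra_simps)
  ultimately show "\<exists>q k c s'. schedule n \<rho> \<epsilon> p q k \<and> (M + 1)^(Suc m - 2) \<le> k \<and> a \<le> c \<and>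
      c + s' \<le> a + s \<and> (1 - 2*\<rho>) * s \<le> s' \<and> spike (Suc m) c s' q \<and> (\<forall>i\<ge>Suc m. q i = p i)"
    using q(3) by blast
qed

lemma collapse_by_rounds:
  assumes shrink: "shrinkable n \<rho> \<epsilon> M m" and m: "2 \<le> m" "m \<le> n" and \<rho>: "0 \<le> \<rho>" "\<rho> \<le> 1/2"
    and "0 \<le> s" "\<epsilon> \<le> s * (1 - 2*\<rho>)^j * (\<rho> * (1 - 2*\<rho>)^M)^(m - 2)" "spike m a s p"
  shows "\<exists>q k c. schedule n \<rho> \<epsilon> p q k \<and> (j + 1) * (M + 1)^(m - 2) \<le> k \<and> a \<le> c \<and> c \<le> a + s \<and>
    (\<forall>i<m. q i = c) \<and> (\<forall>i\<ge>m. q i = p i)"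
  using assms(6-8)
proof (induction j arbitrary: a s p)
  case 0
  then have "\<epsilon> \<le> s * (\<rho> * (1 - 2*\<rho>)^M)^(m - 2)" by simp
  then obtain q k c s' where q: "schedule n \<rho> \<epsilon> p q k" "(M + 1)^(m - 2) \<le> k" "a \<le> c"
    "c + s' \<le> a + s" "(1 - 2*\<rho>) * s \<le> s'" "spike m c s' q" "\<forall>i\<ge>m. q i = p i"
    using shrinkableD[OF shrink 0(1) _ 0(3)] by blast
  have "0 \<le> (1 - 2*\<rho>) * s" using \<rho>(2) \<open>0 \<le> s\<close> by simp
  then have "0 \<le> s'" using q(5) by linarith
  define r where "r = (\<lambda>i. if i < m then c + s' / 2 else q i)"
  have "block_step n \<rho> q {..<m} r"
    unfolding r_def using block_step_spike_merge m \<rho>(2) q(6) \<open>0 \<le> s'\<close> by blast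
  then have "schedule n \<rho> \<epsilon> p r (k + block_comm \<epsilon> q {..<m})"
    using schedule_trans[OF q(1) schedule_single] by blast
  moreover have "a \<le> c + s' / 2" "c + s' / 2 \<le> a + s" using q(3,4) \<open>0 \<le> s'\<close> by linarith+
  moreover have "\<forall>i<m. r i = c + s' / 2" "\<forall>i\<ge>m. r i = p i" using q(7) unfolding r_def by auto
  moreover have "(0 + 1) * (M + 1)^(m - 2) \<le> k + block_comm \<epsilon> q {..<m}" using q(2) by simp
  ultimately show ?case by blast
next
  case (Suc j)
  let ?\<theta> = "(\<rho> * (1 - 2*\<rho>)^M)^(m - 2)"
  have "s * ?\<theta> * (1 - 2*\<rho>)^Suc j \<le> s * ?\<theta>"
    using \<rho> Suc.prems(1) by (intro mult_left_le power_le_one) auto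
  then have "\<epsilon> \<le> s * ?\<theta>" using Suc.prems(2) by (simp add: mult_ac)
  then obtain q k c s' where q: "schedule n \<rho> \<epsilon> p q k" "(M + 1)^(m - 2) \<le> k" "a \<le> c"
    "c + s' \<le> a + s" "(1 - 2*\<rho>) * s \<le> s'" "spike m c s' q" "\<forall>i\<ge>m. q i = p i"
    using shrinkableD[OF shrink Suc.prems(1) _ Suc.prems(3)] by blast
  have "0 \<le> (1 - 2*\<rho>) * s" using \<rho>(2) \<open>0 \<le> s\<close> by simp
  then have "0 \<le> s'" using q(5) by linarith
  moreover have "\<epsilon> \<le> s' * (1 - 2*\<rho>)^j * ?\<theta>"
  proof -
    have "\<epsilon> \<le> ((1 - 2*\<rho>) * s) * (1 - 2*\<rho>)^j * ?\<theta>"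
      using Suc.prems(2) by (simp add: mult_ac)
    also have "\<dots> \<le> s' * (1 - 2*\<rho>)^j * ?\<theta>"
      using q(5) \<rho> by (intro mult_right_mono) auto
    finally show ?thesis .
  qed
  ultimately obtain r k' c' where r: "schedule n \<rho> \<epsilon> q r k'" "(j + 1) * (M + 1)^(m - 2) \<le> k'"
    "c \<le> c'" "c' \<le> c + s'" "\<forall>i<m. r i = c'" "\<forall>i\<ge>m. r i = q i"
    using Suc.IH q(6) by blast
  have "schedule n \<rho> \<epsilon> p r (k + k')" using schedule_trans[OF q(1) r(1)] .
  moreover have "(Suc j + 1) * (M + 1)^(m - 2) \<le> k + k'" using q(2) r(2) by simp
  moreover have "a \<le> c'" "c' \<le> a + s" using q(3,4) r(3,4) by linarith+
  moreover have "\<forall>i\<ge>m. r i = p i" using q(7) r(6) by simp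
  ultimately show ?case using r(5) by blast
qed

lemma collapsible_of_shrinkable:
  assumes "shrinkable n \<rho> \<epsilon> M m" "2 \<le> m" "m \<le> n" "0 \<le> \<rho>" "\<rho> \<le> 1/2"
  shows "collapsible n \<rho> \<epsilon> M m"
  unfolding collapsible_def
proof (intro allI impI)
  fix a s p
  assume "0 \<le> s" "\<epsilon> \<le> s * (1 - 2*\<rho>)^M * (\<rho> * (1 - 2*\<rho>)^M)^(m - 2)" "spike m a s p"
  moreover have "(M + 1) * (M + 1)^(m - 2) = (M + 1)^(m - 1)"
  proof -
    have "m - 1 = Suc (m - 2)" using assms(2) by simp
    then show ?thesis by simp
  qed
  ultimately show "\<exists>q k c. schedule n \<rho> \<epsilon> p q k \<and> (M + 1)^(m - 1) \<le> k \<and> a \<le> c \<and> c \<le> a + s \<and>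
      (\<forall>i<m. q i = c) \<and> (\<forall>i\<ge>m. q i = p i)"
    using collapse_by_rounds[OF assms, of s M a p] by simp
qed

lemma collapsible_all:
  assumes "2 \<le> m" "m \<le> n" "0 \<le> \<rho>" "\<rho> \<le> 1/2"
  shows "collapsible n \<rho> \<epsilon> M m"
  using assms
proof (induction m rule: nat_induct_at_least)
  case base
  then show ?case using collapsible_of_shrinkable shrinkable_two by simp
next
  case (Suc m)
  then show ?case using collapsible_of_shrinkable shrinkable_Suc by simp
qed

lemma minus_ln_one_minus_two_le:
  fixes \<rho> :: real
  assumes "0 \<le> \<rho>" "\<rho> \<le> 1/3"
  shows "- ln (1 - 2*\<rho>) \<le> 6 * \<rho>"
proof -
  have "ln 1 - ln (1 - 2*\<rho>) \<le> (1 - (1 - 2*\<rho>)) / (1 - 2*\<rho>)"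
    using assms by (intro ln_diff_le) auto
  also have "\<dots> \<le> 2 * \<rho> / (1/3)"
    using assms by (intro frac_le) auto
  finally show ?thesis by simp
qed

lemma collapse_threshold_ge:
  assumes n: "2 \<le> n" and \<rho>: "0 < \<rho>" "\<rho> \<le> 1/3" and \<epsilon>: "0 < \<epsilon>" "\<epsilon> \<le> \<rho>^(2*n)"
    and M: "real M \<le> ln (1/\<epsilon>) / (12 * real n * \<rho>)"
  shows "\<epsilon> \<le> (1 - 2*\<rho>)^M * (\<rho> * (1 - 2*\<rho>)^M)^(n - 2)"
proof -
  define L where "L = ln (1/\<epsilon>)"
  have "ln \<epsilon> \<le> ln (\<rho>^(2*n))" using \<epsilon> \<rho> by simp
  then have L_ge: "2 * real n * - ln \<rho> \<le> L" unfolding L_def using \<epsilon> by (simp add: ln_div ln_realpow)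
  have n_pos: "0 < real n" using n by simp
  have "real M * (real n - 1) * - ln (1 - 2*\<rho>) \<le> real M * real n * (6 * \<rho>)"
    using minus_ln_one_minus_two_le[of \<rho>] \<rho> n by (intro mult_mono) auto
  also have "\<dots> \<le> L / (12 * real n * \<rho>) * real n * (6 * \<rho>)"
    using M n_pos \<rho> unfolding L_def by (intro mult_right_mono) auto
  also have "\<dots> = L / 2" using n_pos \<rho> by (simp add: field_simps)
  finally have part_r: "real M * (real n - 1) * - ln (1 - 2*\<rho>) \<le> L / 2" .
  have "(real n - 2) * - ln \<rho> \<le> real n * - ln \<rho>"
    using \<rho> by (intro mult_right_mono) auto
  then have part_\<rho>: "(real n - 2) * - ln \<rho> \<le> L / 2" using L_ge by linarith
  have "ln ((1 - 2*\<rho>)^M * (\<rho> * (1 - 2*\<rho>)^M)^(n - 2)) =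
      - (real M * (real n - 1) * - ln (1 - 2*\<rho>)) - (real n - 2) * - ln \<rho>"
    using \<rho> n by (simp add: ln_mult ln_realpow of_nat_diff algebra_simps)
  also have "\<dots> \<ge> ln \<epsilon>" using part_r part_\<rho> \<epsilon>(1) unfolding L_def by (simp add: ln_div)
  finally show ?thesis using \<rho> \<epsilon> by simp
qed

lemma round_count_exists:
  assumes n: "2 \<le> n" and \<rho>: "0 < \<rho>" "\<rho> \<le> 1/3" and \<epsilon>: "0 < \<epsilon>" "\<epsilon> \<le> \<rho>^(2*n)"
  obtains M :: nat where "\<epsilon> \<le> (1 - 2*\<rho>)^M * (\<rho> * (1 - 2*\<rho>)^M)^(n - 2)"
    "(1/24 / (\<rho> * real n) * log 2 (1/\<epsilon>)) ^ (n - 1) \<le> real ((M + 1)^(n - 1))"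
proof
  define y where "y = ln (1/\<epsilon>) / (12 * real n * \<rho>)"
  have "\<rho>^(2*n) \<le> 1" using \<rho> by (intro power_le_one) auto
  then have "0 \<le> ln (1/\<epsilon>)" using \<epsilon> by simp
  then have "0 \<le> y" unfolding y_def using \<rho> by simp
  then have y_floor: "real (nat \<lfloor>y\<rfloor>) \<le> y" "y < real (nat \<lfloor>y\<rfloor>) + 1" by linarith+
  then show "\<epsilon> \<le> (1 - 2*\<rho>)^nat \<lfloor>y\<rfloor> * (\<rho> * (1 - 2*\<rho>)^nat \<lfloor>y\<rfloor>)^(n - 2)"
    using collapse_threshold_ge[OF n \<rho> \<epsilon>] unfolding y_def by blast
  have "1 \<le> 2 * ln (2::real)" using ln_diff_le[of 1 2] by simp
  then have "1 * ln (1/\<epsilon>) \<le> 2 * ln 2 * ln (1/\<epsilon>)"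
    using \<open>0 \<le> ln (1/\<epsilon>)\<close> by (rule mult_right_mono)
  then have "1/24 / (\<rho> * real n) * log 2 (1/\<epsilon>) \<le> y"
    unfolding y_def log_def using \<rho> n by (simp add: field_simps)
  with y_floor(2) have "1/24 / (\<rho> * real n) * log 2 (1/\<epsilon>) \<le> real (nat \<lfloor>y\<rfloor>) + 1" by linarith
  moreover have "0 \<le> 1/24 / (\<rho> * real n) * log 2 (1/\<epsilon>)"
    using \<open>0 \<le> ln (1/\<epsilon>)\<close> \<rho> unfolding log_def by simp
  ultimately have "(1/24 / (\<rho> * real n) * log 2 (1/\<epsilon>)) ^ (n - 1) \<le> (real (nat \<lfloor>y\<rfloor>) + 1) ^ (n - 1)"
    by (rule power_mono)
  then show "(1/24 / (\<rho> * real n) * log 2 (1/\<epsilon>)) ^ (n - 1) \<le> real ((nat \<lfloor>y\<rfloor> + 1)^(n - 1))"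
    by (simp add: add.commute)
qed

theorem mainTheorem8:
  shows "\<exists>c::real. c > 0 \<and>
    (\<forall>n::nat. \<forall>\<rho>::real. \<forall>\<epsilon>::real.
       n \<ge> 2 \<longrightarrow> 0 < \<rho> \<longrightarrow> \<rho> \<le> 1/3 \<longrightarrow> 0 < \<epsilon> \<longrightarrow> \<epsilon> \<le> \<rho> ^ (2*n) \<longrightarrow>
       (\<exists>g x. averaging_system n \<rho> g x \<and>
          (comm_count n \<epsilon> g x = \<infinity> \<or>
           (c / (\<rho> * real n) * log 2 (1/\<epsilon>)) ^ (n - 1) \<le> real (the_enat (comm_count n \<epsilon> g x)))))"
proof (intro exI[of _ "1/24"] conjI allI impI)
  fix n :: nat and \<rho> \<epsilon> :: real
  assume n: "2 \<le> n" and \<rho>: "0 < \<rho>" "\<rho> \<le> 1/3" and \<epsilon>: "0 < \<epsilon>" "\<epsilon> \<le> \<rho>^(2*n)"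
  obtain M where M: "\<epsilon> \<le> 1 * (1 - 2*\<rho>)^M * (\<rho> * (1 - 2*\<rho>)^M)^(n - 2)"
    "(1/24 / (\<rho> * real n) * log 2 (1/\<epsilon>)) ^ (n - 1) \<le> real ((M + 1)^(n - 1))"
    using round_count_exists[OF n \<rho> \<epsilon>] by auto
  define p :: "nat \<Rightarrow> real" where "p = (\<lambda>i. if i = n - 1 then 1 else 0)"
  have p: "spike n 0 1 p" "in_unit_interval n p" unfolding p_def spike_def in_unit_interval_def by auto
  have "collapsible n \<rho> \<epsilon> M n" using collapsible_all n \<rho> by simp
  then obtain q k c where "schedule n \<rho> \<epsilon> p q k" "(M + 1)^(n - 1) \<le> k"
    "0 \<le> c" "c \<le> 0 + 1" "\<forall>i<n. q i = c" "\<forall>i\<ge>n. q i = p i"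
    using zero_le_one M(1) p(1) by (rule collapsibleD)
  then obtain g x where sys: "averaging_system n \<rho> g x" and count: "comm_count n \<epsilon> g x = enat k"
    using schedule_realizable[OF _ p(2)] \<rho>(1) \<epsilon>(1) by (meson less_imp_le)
  have "(1/24 / (\<rho> * real n) * log 2 (1/\<epsilon>)) ^ (n - 1) \<le> real (the_enat (comm_count n \<epsilon> g x))"
    using order_trans[OF M(2) of_nat_mono[OF \<open>(M + 1)^(n - 1) \<le> k\<close>]] unfolding count by simp
  with sys show "\<exists>g x. averaging_system n \<rho> g x \<and> (comm_count n \<epsilon> g x = \<infinity> \<or>
      (1/24 / (\<rho> * real n) * log 2 (1/\<epsilon>)) ^ (n - 1) \<le> real (the_enat (comm_count n \<epsilon> g x)))"
    by blast
qed simp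

end
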